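(* Let $W$ be an sc-Banach space, $E=\mathbb R^n\oplus W$, $C=[0,\infty)^n\oplus W$, and let $N$ be a finite-dimensional subspace of $E$ in good position to $C$, with good complement $N^\perp$ and constant $c>0$ (as in the definition of good position). Let $\Sigma=\bigcup_{a\in C\cap N,\,a\ne0}\sigma_a\subset\{1,\dots,n\}$ and $\Sigma^c=\{1,\dots,n\}\setminus\Sigma$. Then $N^\perp\subset\mathbb R^{\Sigma^c}\oplus W$.
   Context: An sc-Banach space is a Banach space $W$ with nested Banach spaces $W=W_0\supset W_1\supset\cdots$, compact inclusions $W_n\to W_m$ ($m<n$), $\bigcap W_m$ dense in each $W_m$; $E$ has levels $\mathbb R^n\oplus W_m$ and $\|\cdot\|$ denotes its level-$0$ norm. For $a=(a_1,\dots,a_n,a_\infty)\in C$, $\sigma_a=\{i: a_i=0\}$. For $S\subset\{1,\dots,n\}$, $\mathbb R^S=\{x\in\mathbb R^n: x_j=0\text{ for all } j\notin S\}$. An sc-complement of $N$ is a closed subspace $N^\perp$ with $E_m=(N\cap E_m)\oplus(N^\perp\cap E_m)$ topologically for all $m$, both sc-subspaces. $N$ is in good position to $C$ if $N\cap C$ has nonempty interior in $N$ and there exist an sc-complement $N^\perp$ (a good complement) and $c>0$ such that for every $(n,m)\in N\oplus N^\perp$ with $\|m\|\le c\|n\|$: $n+m\in C$ iff $n\in C$. *)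

theory Defs
  imports "HOL-Analysis.Analysis"
begin

definition norm_on :: "('w::real_vector) set \<Rightarrow> ('w \<Rightarrow> real) \<Rightarrow> bool" where
  "norm_on V nr \<longleftrightarrow>
     (\<forall>x\<in>V. 0 \<le> nr x) \<and> (\<forall>x\<in>V. nr x = 0 \<longleftrightarrow> x = 0) \<and>
     (\<forall>x\<in>V. \<forall>a::real. nr (a *\<^sub>R x) = \<bar>a\<bar> * nr x) \<and>
     (\<forall>x\<in>V. \<forall>y\<in>V. nr (x + y) \<le> nr x + nr y)"

definition sc_banach :: "(nat \<Rightarrow> ('w::banach) set) \<Rightarrow> (nat \<Rightarrow> 'w \<Rightarrow> real) \<Rightarrow> bool" where
  "sc_banach Ws nr \<longleftrightarrow>
     Ws 0 = UNIV \<and> (\<forall>x. nr 0 x = norm x) \<and>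
     (\<forall>m. subspace (Ws m) \<and> norm_on (Ws m) (nr m)) \<and>
     (\<forall>m. Ws (Suc m) \<subseteq> Ws m) \<and>
     (\<forall>m. \<forall>s::nat \<Rightarrow> 'w. (\<forall>j. s j \<in> Ws m) \<longrightarrow>
            (\<forall>e>0. \<exists>N. \<forall>p\<ge>N. \<forall>q\<ge>N. nr m (s p - s q) < e) \<longrightarrow>
            (\<exists>l\<in>Ws m. (\<lambda>j. nr m (s j - l)) \<longlonglongrightarrow> 0)) \<and>
     (\<forall>m k. m < k \<longrightarrow> (\<forall>(s::nat \<Rightarrow> 'w) B. (\<forall>j. s j \<in> Ws k \<and> nr k (s j) \<le> B) \<longrightarrow>
            (\<exists>r l. strict_mono r \<and> l \<in> Ws m \<and> (\<lambda>j. nr m (s (r j) - l)) \<longlonglongrightarrow> 0))) \<and>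
     (\<forall>m. \<forall>x\<in>Ws m. \<forall>e>0. \<exists>y\<in>(\<Inter>k. Ws k). nr m (x - y) < e)"

definition Elev :: "(nat \<Rightarrow> 'w set) \<Rightarrow> nat \<Rightarrow> ((real^'n) \<times> 'w) set" where
  "Elev Ws m = UNIV \<times> Ws m"

definition Enorm :: "(nat \<Rightarrow> 'w \<Rightarrow> real) \<Rightarrow> nat \<Rightarrow> ((real^'n) \<times> 'w) \<Rightarrow> real" where
  "Enorm nr m e = sqrt ((norm (fst e))\<^sup>2 + (nr m (snd e))\<^sup>2)"

definition Einf :: "(nat \<Rightarrow> 'w set) \<Rightarrow> ((real^'n) \<times> 'w) set" where
  "Einf Ws = (\<Inter>m. Elev Ws m)"

text \<open>sc-subspace: closed linear subspace F of E whose induced filtration F_m = F \<inter> E_m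
  is an sc-structure, i.e. (closedness and compactness being inherited) F_\<infinity> is dense in each F_m.\<close>
definition sc_subspace :: "(nat \<Rightarrow> ('w::banach) set) \<Rightarrow> (nat \<Rightarrow> 'w \<Rightarrow> real) \<Rightarrow>
     ((real^'n) \<times> 'w) set \<Rightarrow> bool" where
  "sc_subspace Ws nr F \<longleftrightarrow> subspace F \<and> closed F \<and>
     (\<forall>m. \<forall>x\<in>F \<inter> Elev Ws m. \<forall>e>0. \<exists>y\<in>F \<inter> Einf Ws. Enorm nr m (x - y) < e)"

definition sc_complement :: "(nat \<Rightarrow> ('w::banach) set) \<Rightarrow> (nat \<Rightarrow> 'w \<Rightarrow> real) \<Rightarrow>
     ((real^'n) \<times> 'w) set \<Rightarrow> ((real^'n) \<times> 'w) set \<Rightarrow> bool" where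
  "sc_complement Ws nr N Np \<longleftrightarrow>
     closed Np \<and> subspace Np \<and> sc_subspace Ws nr N \<and> sc_subspace Ws nr Np \<and>
     N \<inter> Np = {0} \<and>
     (\<forall>m. (\<forall>e\<in>Elev Ws m. \<exists>a\<in>N \<inter> Elev Ws m. \<exists>b\<in>Np \<inter> Elev Ws m. e = a + b) \<and>
          (\<exists>K. \<forall>a\<in>N \<inter> Elev Ws m. \<forall>b\<in>Np \<inter> Elev Ws m.
                 Enorm nr m a \<le> K * Enorm nr m (a + b) \<and> Enorm nr m b \<le> K * Enorm nr m (a + b)))"

definition quadC :: "((real^'n) \<times> 'w) set" where
  "quadC = {e. \<forall>i. 0 \<le> fst e $ i}"

definition sigma :: "((real^'n) \<times> 'w) \<Rightarrow> 'n set" where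
  "sigma a = {i. fst a $ i = 0}"

definition good_complement :: "(nat \<Rightarrow> ('w::banach) set) \<Rightarrow> (nat \<Rightarrow> 'w \<Rightarrow> real) \<Rightarrow>
     ((real^'n) \<times> 'w) set \<Rightarrow> ((real^'n) \<times> 'w) set \<Rightarrow> real \<Rightarrow> bool" where
  "good_complement Ws nr N Np c \<longleftrightarrow>
     (\<exists>x\<in>N \<inter> quadC. \<exists>r>0. \<forall>y\<in>N. dist y x < r \<longrightarrow> y \<in> quadC) \<and>
     sc_complement Ws nr N Np \<and> c > 0 \<and>
     (\<forall>n\<in>N. \<forall>m\<in>Np. norm m \<le> c * norm n \<longrightarrow> (n + m \<in> quadC \<longleftrightarrow> n \<in> quadC))"

end

theory Submission
  imports Defs
begin

text \<open>If a nonzero a \<in> C \<inter> N has a_j = 0 and e \<in> Np is nonzero, rescale e to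
  \<plusminus>t e with norm c\<parallel>a\<parallel>. Good position puts both a + t e and a - t e into C, so
  t e_j \<ge> 0 and -t e_j \<ge> 0, whence e_j = 0. Only the good-position inequality is
  used.\<close>

lemma quadC_coord_zero_if_two_sided:
  assumes "a + t *\<^sub>R e \<in> quadC" and "a - t *\<^sub>R e \<in> quadC"
    and "fst a $ j = 0" and "t \<noteq> 0"
  shows "fst e $ j = 0"
proof -
  have "0 \<le> t * fst e $ j" and "0 \<le> - (t * fst e $ j)"
    using assms(1-3) by (auto simp: quadC_def dest: spec[of _ j])
  then have "t * fst e $ j = 0" by linarith
  with \<open>t \<noteq> 0\<close> show ?thesis by simp
qed

lemma good_complement_perturb_in_quadC:
  assumes "good_complement Ws nr N Np c"
    and "n \<in> N" and "n \<in> quadC" and "m \<in> Np" and "norm m \<le> c * norm n"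
  shows "n + m \<in> quadC"
  using assms by (auto simp: good_complement_def)

lemma good_complement_scaled_in_quadC:
  assumes good: "good_complement Ws nr N Np c"
    and "a \<in> N" and "a \<in> quadC" and "e \<in> Np" and "\<bar>s\<bar> = c * norm a / norm e"
  shows "a + s *\<^sub>R e \<in> quadC"
proof (rule good_complement_perturb_in_quadC[OF good \<open>a \<in> N\<close> \<open>a \<in> quadC\<close>])
  have "subspace Np" using good by (simp add: good_complement_def sc_complement_def)
  then show "s *\<^sub>R e \<in> Np" using \<open>e \<in> Np\<close> by (simp add: subspace_scale)
  have "c \<ge> 0" using good by (simp add: good_complement_def)
  then show "norm (s *\<^sub>R e) \<le> c * norm a"
    using \<open>\<bar>s\<bar> = c * norm a / norm e\<close> by (cases "e = 0") auto
qed

theorem lemma6p6: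
  fixes Ws :: "nat \<Rightarrow> ('w::banach) set" and nr :: "nat \<Rightarrow> 'w \<Rightarrow> real"
    and N Np :: "((real^'n) \<times> 'w) set" and c :: real
  assumes "sc_banach Ws nr"
    and "subspace N" and "\<exists>B. finite B \<and> N = span B"
    and "good_complement Ws nr N Np c"
  shows "Np \<subseteq> {e. \<forall>j\<in>(\<Union>a\<in>{a\<in>quadC \<inter> N. a \<noteq> 0}. sigma a). fst e $ j = 0}"
proof (intro subsetI CollectI ballI)
  fix e j
  assume "e \<in> Np" and "j \<in> (\<Union>a\<in>{a\<in>quadC \<inter> N. a \<noteq> 0}. sigma a)"
  then obtain a where "a \<in> quadC" "a \<in> N" "a \<noteq> 0" "fst a $ j = 0"
    by (auto simp: sigma_def)
  show "fst e $ j = 0"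
  proof (cases "e = 0")
    case False
    define t where "t = c * norm a / norm e"
    have "t > 0"
      using False \<open>a \<noteq> 0\<close> assms(4) by (simp add: t_def good_complement_def)
    have "a + s *\<^sub>R e \<in> quadC" if "\<bar>s\<bar> = t" for s
      using good_complement_scaled_in_quadC[OF assms(4) \<open>a \<in> N\<close> \<open>a \<in> quadC\<close> \<open>e \<in> Np\<close>]
        that by (simp add: t_def)
    from this[of t] this[of "- t"] \<open>t > 0\<close>
    have "a + t *\<^sub>R e \<in> quadC" and "a - t *\<^sub>R e \<in> quadC" by simp_all
    with \<open>t > 0\<close> \<open>fst a $ j = 0\<close> show ?thesis
      by (simp add: quadC_coord_zero_if_two_sided)
  qed simp
qed

end
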